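(* (Compatibility.) Let $E$ be an evident branch. For every type $\sigma$, every $n\ge 0$, all terms $s,t$ of type $\sigma$, and all terms $xs_1\dots s_n$, $xt_1\dots t_n$ of type $\sigma$ with $x$ a variable: (1) it is not the case that both $s\asymp_\sigma t$ and $[s]\not\parallel[t]$; (2) either $xs_1\dots s_n\asymp_\sigma xt_1\dots t_n$ or $[s_i]\not\parallel[t_i]$ for some $i\in\{1,\dots,n\}$.
   Context: Types: a countable set of base types including a distinguished $o$; other base types are sorts ($\alpha$). Types: base types and $\sigma\tau$ (functions from $\sigma$ to $\tau$; $\sigma\tau\mu=\sigma(\tau\mu)$). Countably many names with unique types, infinitely many per type. Terms: names; $st:\mu$ for $s:\tau\mu,t:\tau$; $\lambda x.t:\sigma\tau$ for a name $x:\sigma$, $t:\tau$. $\mathrm{Wff}_\sigma$: terms of type $\sigma$. Logical constants: $\neg:oo$, $=_\sigma:\sigma\sigma o$; other names are variables. Formulas: terms of type $o$; $s=_\sigma t$ is $(=_\sigma s)t$; $s\neq_\sigma t$ is $\neg(s=_\sigma t)$. A fixed type-preserving total normalization operator $[\cdot]$ on terms, with $s$ normal iff $[s]=s$, satisfies $[[s]]=[s]$, $[[s]t]=[st]$, and $[ys_1\dots s_n]=y[s_1]\dots[s_n]$ for any name $y$, $n\ge0$, with $ys_1\dots s_n$ of base type. A branch is a set of normal formulas. $E$ is evident if ($x$ ranges over variables): (DN) $\neg\neg s\in E\Rightarrow s\in E$; (BQ) $s=_ot\in E\Rightarrow$ ($s,t\in E$ or $\neg s,\neg t\in E$); (BE)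 $s\neq_ot\in E\Rightarrow$ ($s,\neg t\in E$ or $\neg s,t\in E$); (FQ) $s=_{\sigma\tau}t\in E\Rightarrow[su]=[tu]\in E$ for all normal $u:\sigma$; (FE) $s\neq_{\sigma\tau}t\in E\Rightarrow[sx]\neq[tx]\in E$ for some variable $x$; (Mat) $xs_1\dots s_n,\neg xt_1\dots t_n\in E\Rightarrow n\ge1$ and $s_i\neq t_i\in E$ for some $i$; (Dec) $xs_1\dots s_n\neq_\alpha xt_1\dots t_n\in E\Rightarrow n\ge 1$ and $s_i\neq t_i\in E$ for some $i$; (Con) $s=_\alpha t,u\neq_\alpha v\in E\Rightarrow$ ($s\neq u,t\neq u\in E$) or ($s\neq v,t\neq v\in E$). Notation: $s\not\parallel t$ means $E$ contains $s\neq t$ or $t\neq s$. Compatibility relations $\asymp_\sigma\subseteq\mathrm{Wff}_\sigma\times\mathrm{Wff}_\sigma$ are defined by induction on types: $s\asymp_o t$ iff $\{[s],\neg[t]\}\not\subseteq E$ and $\{\neg[s],[t]\}\not\subseteq E$; for a sort $\alpha$, $s\asymp_\alpha t$ iff not $[s]\not\parallel[t]$; $s\asymp_{\sigma\tau}t$ iff $su\asymp_\tau tv$ whenever $u\asymp_\sigma v$. *)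

theory Defs
  imports Main
begin

datatype ty = Base nat | Fn ty ty

abbreviation tyo :: ty where "tyo \<equiv> Base 0"

definition is_sort :: "ty \<Rightarrow> bool" where
  "is_sort a \<longleftrightarrow> (\<exists>k. k \<noteq> 0 \<and> a = Base k)"

datatype name = NegC | EqC ty | Var nat ty

fun nty :: "name \<Rightarrow> ty" where
  "nty NegC = Fn tyo tyo"
| "nty (EqC s) = Fn s (Fn s tyo)"
| "nty (Var k s) = s"

definition is_var :: "name \<Rightarrow> bool" where
  "is_var x \<longleftrightarrow> (\<exists>k s. x = Var k s)"

datatype tm = Nm name | App tm tm | Lam name tm

inductive has_ty :: "tm \<Rightarrow> ty \<Rightarrow> bool" where
  "has_ty (Nm x) (nty x)"
| "has_ty s (Fn \<sigma> \<tau>) \<Longrightarrow> has_ty t \<sigma> \<Longrightarrow> has_ty (App s t) \<tau>"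
| "has_ty t \<tau> \<Longrightarrow> has_ty (Lam x t) (Fn (nty x) \<tau>)"

definition Wff :: "ty \<Rightarrow> tm set" where
  "Wff \<sigma> = {t. has_ty t \<sigma>}"

definition apps :: "tm \<Rightarrow> tm list \<Rightarrow> tm" where
  "apps h ss = foldl App h ss"

definition neg :: "tm \<Rightarrow> tm" where
  "neg s = App (Nm NegC) s"

definition eq :: "ty \<Rightarrow> tm \<Rightarrow> tm \<Rightarrow> tm" where
  "eq \<sigma> s t = App (App (Nm (EqC \<sigma>)) s) t"

definition neq :: "ty \<Rightarrow> tm \<Rightarrow> tm \<Rightarrow> tm" where
  "neq \<sigma> s t = neg (eq \<sigma> s t)"

definition is_norm :: "(tm \<Rightarrow> tm) \<Rightarrow> bool" where
  "is_norm N \<longleftrightarrow>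
     (\<forall>\<sigma> s. s \<in> Wff \<sigma> \<longrightarrow> N s \<in> Wff \<sigma>) \<and>
     (\<forall>\<sigma> s. s \<in> Wff \<sigma> \<longrightarrow> N (N s) = N s) \<and>
     (\<forall>\<sigma> \<tau> s t. s \<in> Wff (Fn \<sigma> \<tau>) \<longrightarrow> t \<in> Wff \<sigma> \<longrightarrow> N (App (N s) t) = N (App s t)) \<and>
     (\<forall>y ss k. apps (Nm y) ss \<in> Wff (Base k) \<longrightarrow>
        N (apps (Nm y) ss) = apps (Nm y) (map N ss))"

definition normal :: "(tm \<Rightarrow> tm) \<Rightarrow> tm \<Rightarrow> bool" where
  "normal N s \<longleftrightarrow> N s = s"

definition branch :: "(tm \<Rightarrow> tm) \<Rightarrow> tm set \<Rightarrow> bool" where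
  "branch N E \<longleftrightarrow> (\<forall>s\<in>E. s \<in> Wff tyo \<and> normal N s)"

definition neq_in :: "tm set \<Rightarrow> tm \<Rightarrow> tm \<Rightarrow> bool" where
  "neq_in E s t \<longleftrightarrow> (\<exists>\<sigma>. neq \<sigma> s t \<in> E)"

definition npar :: "tm set \<Rightarrow> tm \<Rightarrow> tm \<Rightarrow> bool" where
  "npar E s t \<longleftrightarrow> neq_in E s t \<or> neq_in E t s"

definition evident :: "(tm \<Rightarrow> tm) \<Rightarrow> tm set \<Rightarrow> bool" where
  "evident N E \<longleftrightarrow>
    \<comment> \<open>DN\<close>
    (\<forall>s. neg (neg s) \<in> E \<longrightarrow> s \<in> E) \<and>
    \<comment> \<open>BQ\<close>
    (\<forall>s t. eq tyo s t \<in> E \<longrightarrow> (s \<in> E \<and> t \<in> E) \<or> (neg s \<in> E \<and> neg t \<in> E)) \<and>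
    \<comment> \<open>BE\<close>
    (\<forall>s t. neq tyo s t \<in> E \<longrightarrow> (s \<in> E \<and> neg t \<in> E) \<or> (neg s \<in> E \<and> t \<in> E)) \<and>
    \<comment> \<open>FQ\<close>
    (\<forall>\<sigma> \<tau> s t. eq (Fn \<sigma> \<tau>) s t \<in> E \<longrightarrow>
       (\<forall>u. u \<in> Wff \<sigma> \<and> normal N u \<longrightarrow> eq \<tau> (N (App s u)) (N (App t u)) \<in> E)) \<and>
    \<comment> \<open>FE\<close>
    (\<forall>\<sigma> \<tau> s t. neq (Fn \<sigma> \<tau>) s t \<in> E \<longrightarrow>
       (\<exists>k. neq \<tau> (N (App s (Nm (Var k \<sigma>)))) (N (App t (Nm (Var k \<sigma>)))) \<in> E)) \<and>
    \<comment> \<open>Mat\<close>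
    (\<forall>x ss ts. is_var x \<longrightarrow> length ss = length ts \<longrightarrow>
       apps (Nm x) ss \<in> E \<longrightarrow> neg (apps (Nm x) ts) \<in> E \<longrightarrow>
       length ss \<ge> 1 \<and> (\<exists>i<length ss. neq_in E (ss ! i) (ts ! i))) \<and>
    \<comment> \<open>Dec\<close>
    (\<forall>\<alpha> x ss ts. is_sort \<alpha> \<longrightarrow> is_var x \<longrightarrow> length ss = length ts \<longrightarrow>
       neq \<alpha> (apps (Nm x) ss) (apps (Nm x) ts) \<in> E \<longrightarrow>
       length ss \<ge> 1 \<and> (\<exists>i<length ss. neq_in E (ss ! i) (ts ! i))) \<and>
    \<comment> \<open>Con\<close>
    (\<forall>\<alpha> s t u v. is_sort \<alpha> \<longrightarrow> eq \<alpha> s t \<in> E \<longrightarrow> neq \<alpha> u v \<in> E \<longrightarrow>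
       (neq \<alpha> s u \<in> E \<and> neq \<alpha> t u \<in> E) \<or> (neq \<alpha> s v \<in> E \<and> neq \<alpha> t v \<in> E))"

fun compat :: "(tm \<Rightarrow> tm) \<Rightarrow> tm set \<Rightarrow> ty \<Rightarrow> tm \<Rightarrow> tm \<Rightarrow> bool" where
  "compat N E (Base k) s t =
     (if k = 0 then \<not> ({N s, neg (N t)} \<subseteq> E) \<and> \<not> ({neg (N s), N t} \<subseteq> E)
      else \<not> npar E (N s) (N t))"
| "compat N E (Fn \<sigma> \<tau>) s t =
     (\<forall>u v. u \<in> Wff \<sigma> \<longrightarrow> v \<in> Wff \<sigma> \<longrightarrow> compat N E \<sigma> u v \<longrightarrow>
        compat N E \<tau> (App s u) (App t v))"

end

theory Submission
  imports Defs
begin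

text \<open>Both claims are proved together by induction on the type. At o, claim (1) is (BE) and
  claim (2) is (Mat); at a sort, (1) holds by definition of compatibility and (2) is (Dec).
  At a function type \<sigma>\<tau>, (FE) turns a separation of s and t into a separation of s x and t x
  for a variable x, and x is compatible with itself by (2) at \<sigma>, so (1) at \<tau> applies.
  For (2), compatible arguments u, v are appended to the argument lists; they are not
  separated by (1) at \<sigma>, so (2) at \<tau> applies.\<close>

lemma has_ty_unique: "has_ty t \<sigma> \<Longrightarrow> has_ty t \<sigma>' \<Longrightarrow> \<sigma> = \<sigma>'"
proof (induction t \<sigma> arbitrary: \<sigma>' rule: has_ty.induct)
  case (1 x)
  then show ?case by (auto elim: has_ty.cases)
next
  case (2 s \<sigma> \<tau> t)
  from 2(5) obtain \<rho> where "has_ty s (Fn \<rho> \<sigma>')" by (auto elim: has_ty.cases)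
  with 2(3) show ?case by auto
next
  case (3 t \<tau> x)
  from 3(3) obtain \<rho> where "\<sigma>' = Fn (nty x) \<rho>" "has_ty t \<rho>" by (auto elim: has_ty.cases)
  with 3(2) show ?case by auto
qed

lemma neq_Wff_tyo_type:
  assumes "neq \<sigma>' a b \<in> Wff tyo" and "a \<in> Wff \<sigma>"
  shows "\<sigma>' = \<sigma>"
proof -
  from assms(1) obtain \<rho> where "has_ty (App (App (Nm (EqC \<sigma>')) a) b) \<rho>"
    unfolding neq_def neg_def eq_def Wff_def by (auto elim: has_ty.cases)
  then obtain \<rho>' \<rho>'' where "has_ty (Nm (EqC \<sigma>')) (Fn \<rho>' \<rho>'')" "has_ty a \<rho>'"
    by (auto elim!: has_ty.cases[of "App _ _"])
  moreover have "has_ty (Nm (EqC \<sigma>')) (Fn \<sigma>' (Fn \<sigma>' tyo))"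
    using has_ty.intros(1)[of "EqC \<sigma>'"] by simp
  ultimately show ?thesis
    using assms(2) has_ty_unique unfolding Wff_def by blast
qed

lemma Var_Wff: "Nm (Var k \<sigma>) \<in> Wff \<sigma>"
  unfolding Wff_def using has_ty.intros(1)[of "Var k \<sigma>"] by simp

lemma App_Wff: "s \<in> Wff (Fn \<sigma> \<tau>) \<Longrightarrow> u \<in> Wff \<sigma> \<Longrightarrow> App s u \<in> Wff \<tau>"
  unfolding Wff_def using has_ty.intros(2) by blast

lemma apps_snoc: "apps h (ss @ [u]) = App (apps h ss) u"
  by (simp add: apps_def)

lemma is_sort_Base_iff: "is_sort (Base k) \<longleftrightarrow> k \<noteq> 0"
  by (auto simp: is_sort_def)

locale evident_branch =
  fixes N :: "tm \<Rightarrow> tm" and E :: "tm set"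
  assumes is_norm: "is_norm N" and branch: "branch N E" and evident: "evident N E"
begin

lemma N_Wff: "s \<in> Wff \<sigma> \<Longrightarrow> N s \<in> Wff \<sigma>"
  using is_norm unfolding is_norm_def by blast

lemma N_App_N: "s \<in> Wff (Fn \<sigma> \<tau>) \<Longrightarrow> t \<in> Wff \<sigma> \<Longrightarrow> N (App (N s) t) = N (App s t)"
  using is_norm unfolding is_norm_def by blast

lemma N_apps_Base: "apps (Nm y) ss \<in> Wff (Base k) \<Longrightarrow> N (apps (Nm y) ss) = apps (Nm y) (map N ss)"
  using is_norm unfolding is_norm_def by blast

lemma evident_BE: "neq tyo s t \<in> E \<Longrightarrow> (s \<in> E \<and> neg t \<in> E) \<or> (neg s \<in> E \<and> t \<in> E)"
  using evident unfolding evident_def by (elim conjE) metis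

lemma evident_FE:
  "neq (Fn \<sigma> \<tau>) s t \<in> E \<Longrightarrow> \<exists>k. neq \<tau> (N (App s (Nm (Var k \<sigma>)))) (N (App t (Nm (Var k \<sigma>)))) \<in> E"
  using evident unfolding evident_def by (elim conjE) metis

lemma evident_Mat:
  "is_var x \<Longrightarrow> length ss = length ts \<Longrightarrow> apps (Nm x) ss \<in> E \<Longrightarrow> neg (apps (Nm x) ts) \<in> E \<Longrightarrow>
   \<exists>i<length ss. neq_in E (ss ! i) (ts ! i)"
  using evident unfolding evident_def by (elim conjE) metis

lemma evident_Dec:
  "is_sort \<alpha> \<Longrightarrow> is_var x \<Longrightarrow> length ss = length ts \<Longrightarrow>
   neq \<alpha> (apps (Nm x) ss) (apps (Nm x) ts) \<in> E \<Longrightarrow> \<exists>i<length ss. neq_in E (ss ! i) (ts ! i)"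
  using evident unfolding evident_def by (elim conjE) metis

text \<open>The type index of an inequation in E is existentially quantified in npar; since E
  contains only formulas, it must be the type of the two sides.\<close>
lemma npar_at_type:
  assumes "npar E a b" and "a \<in> Wff \<sigma>" and "b \<in> Wff \<sigma>"
  shows "neq \<sigma> a b \<in> E \<or> neq \<sigma> b a \<in> E"
  using assms branch neq_Wff_tyo_type unfolding npar_def neq_in_def branch_def by metis

definition compat_excludes_npar :: "ty \<Rightarrow> bool" where
  "compat_excludes_npar \<sigma> \<longleftrightarrow>
     (\<forall>s t. s \<in> Wff \<sigma> \<longrightarrow> t \<in> Wff \<sigma> \<longrightarrow> \<not> (compat N E \<sigma> s t \<and> npar E (N s) (N t)))"

definition compat_var_heads :: "ty \<Rightarrow> bool" where
  "compat_var_heads \<sigma> \<longleftrightarrow>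
     (\<forall>x ss ts. is_var x \<longrightarrow> length ss = length ts \<longrightarrow>
        apps (Nm x) ss \<in> Wff \<sigma> \<longrightarrow> apps (Nm x) ts \<in> Wff \<sigma> \<longrightarrow>
        compat N E \<sigma> (apps (Nm x) ss) (apps (Nm x) ts) \<or>
        (\<exists>i<length ss. npar E (N (ss ! i)) (N (ts ! i))))"

lemma compat_excludes_npar_tyo: "compat_excludes_npar tyo"
  unfolding compat_excludes_npar_def
proof (intro allI impI notI)
  fix s t
  assume "s \<in> Wff tyo" "t \<in> Wff tyo" and st: "compat N E tyo s t \<and> npar E (N s) (N t)"
  then have "neq tyo (N s) (N t) \<in> E \<or> neq tyo (N t) (N s) \<in> E"
    using npar_at_type N_Wff by blast
  then show False
    using evident_BE st by auto
qed

lemma compat_excludes_npar_sort: "k \<noteq> 0 \<Longrightarrow> compat_excludes_npar (Base k)"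
  unfolding compat_excludes_npar_def by simp

lemma compat_var_heads_Base: "compat_var_heads (Base k)"
  unfolding compat_var_heads_def
proof (intro allI impI disjCI)
  fix x ss ts
  assume x: "is_var x" and len: "length ss = length ts"
    and wf: "apps (Nm x) ss \<in> Wff (Base k)" "apps (Nm x) ts \<in> Wff (Base k)"
    and args: "\<not> (\<exists>i<length ss. npar E (N (ss ! i)) (N (ts ! i)))"
  have sep: "\<not> neq_in E (map N ss ! i) (map N ts ! i)" "\<not> neq_in E (map N ts ! i) (map N ss ! i)"
    if "i < length ss" for i
    using args len that by (auto simp: npar_def)
  have N_heads: "N (apps (Nm x) ss) = apps (Nm x) (map N ss)" "N (apps (Nm x) ts) = apps (Nm x) (map N ts)"
    using N_apps_Base wf by blast+
  show "compat N E (Base k) (apps (Nm x) ss) (apps (Nm x) ts)"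
  proof (cases "k = 0")
    case True
    have "\<not> (apps (Nm x) (map N ss) \<in> E \<and> neg (apps (Nm x) (map N ts)) \<in> E)"
      using evident_Mat[OF x, of "map N ss" "map N ts"] sep len by auto
    moreover have "\<not> (apps (Nm x) (map N ts) \<in> E \<and> neg (apps (Nm x) (map N ss)) \<in> E)"
      using evident_Mat[OF x, of "map N ts" "map N ss"] sep len by auto
    ultimately show ?thesis
      using True N_heads by auto
  next
    case False
    then have sort: "is_sort (Base k)"
      by (simp add: is_sort_Base_iff)
    have "\<not> neq (Base k) (apps (Nm x) (map N ss)) (apps (Nm x) (map N ts)) \<in> E"
      using evident_Dec[OF sort x, of "map N ss" "map N ts"] sep len by auto
    moreover have "\<not> neq (Base k) (apps (Nm x) (map N ts)) (apps (Nm x) (map N ss)) \<in> E"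
      using evident_Dec[OF sort x, of "map N ts" "map N ss"] sep len by auto
    moreover have "N (apps (Nm x) ss) \<in> Wff (Base k)" "N (apps (Nm x) ts) \<in> Wff (Base k)"
      using wf N_Wff by blast+
    ultimately show ?thesis
      using False N_heads npar_at_type by fastforce
  qed
qed

lemma compat_var_self: "compat_var_heads \<sigma> \<Longrightarrow> compat N E \<sigma> (Nm (Var k \<sigma>)) (Nm (Var k \<sigma>))"
  using Var_Wff unfolding compat_var_heads_def
  by (metis (no_types) apps_def foldl_Nil is_var_def length_0_conv not_less0)

lemma compat_excludes_npar_Fn:
  assumes "compat_var_heads \<sigma>" and IH: "compat_excludes_npar \<tau>"
  shows "compat_excludes_npar (Fn \<sigma> \<tau>)"
  unfolding compat_excludes_npar_def
proof (intro allI impI notI)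
  fix s t
  assume wf: "s \<in> Wff (Fn \<sigma> \<tau>)" "t \<in> Wff (Fn \<sigma> \<tau>)"
    and st: "compat N E (Fn \<sigma> \<tau>) s t \<and> npar E (N s) (N t)"
  then have "neq (Fn \<sigma> \<tau>) (N s) (N t) \<in> E \<or> neq (Fn \<sigma> \<tau>) (N t) (N s) \<in> E"
    using npar_at_type N_Wff by blast
  then obtain k where "npar E (N (App (N s) (Nm (Var k \<sigma>)))) (N (App (N t) (Nm (Var k \<sigma>))))"
    using evident_FE unfolding npar_def neq_in_def by metis
  then have "npar E (N (App s (Nm (Var k \<sigma>)))) (N (App t (Nm (Var k \<sigma>))))"
    using N_App_N wf Var_Wff by metis
  moreover have "compat N E \<tau> (App s (Nm (Var k \<sigma>))) (App t (Nm (Var k \<sigma>)))"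
    using st compat_var_self[OF assms(1)] Var_Wff by auto
  ultimately show False
    using IH wf Var_Wff App_Wff unfolding compat_excludes_npar_def by blast
qed

lemma compat_var_heads_Fn:
  assumes IH\<sigma>: "compat_excludes_npar \<sigma>" and IH\<tau>: "compat_var_heads \<tau>"
  shows "compat_var_heads (Fn \<sigma> \<tau>)"
  unfolding compat_var_heads_def
proof (intro allI impI disjCI)
  fix x ss ts
  assume x: "is_var x" and len: "length ss = length ts"
    and wf: "apps (Nm x) ss \<in> Wff (Fn \<sigma> \<tau>)" "apps (Nm x) ts \<in> Wff (Fn \<sigma> \<tau>)"
    and args: "\<not> (\<exists>i<length ss. npar E (N (ss ! i)) (N (ts ! i)))"
  show "compat N E (Fn \<sigma> \<tau>) (apps (Nm x) ss) (apps (Nm x) ts)"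
    unfolding compat.simps
  proof (intro allI impI)
    fix u v
    assume u: "u \<in> Wff \<sigma>" and v: "v \<in> Wff \<sigma>" and uv: "compat N E \<sigma> u v"
    have "\<not> npar E (N u) (N v)"
      using IH\<sigma> u v uv unfolding compat_excludes_npar_def by blast
    then have "\<not> (\<exists>i<length (ss @ [u]). npar E (N ((ss @ [u]) ! i)) (N ((ts @ [v]) ! i)))"
      using args len by (auto simp: nth_append less_Suc_eq)
    moreover have "apps (Nm x) (ss @ [u]) \<in> Wff \<tau>" "apps (Nm x) (ts @ [v]) \<in> Wff \<tau>"
      using wf u v App_Wff by (simp_all add: apps_snoc)
    ultimately have "compat N E \<tau> (apps (Nm x) (ss @ [u])) (apps (Nm x) (ts @ [v]))"
      using IH\<tau>[unfolded compat_var_heads_def, rule_format, OF x, of "ss @ [u]" "ts @ [v]"] len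
      by auto
    then show "compat N E \<tau> (App (apps (Nm x) ss) u) (App (apps (Nm x) ts) v)"
      by (simp add: apps_snoc)
  qed
qed

lemma compatibility: "compat_excludes_npar \<sigma> \<and> compat_var_heads \<sigma>"
proof (induction \<sigma>)
  case (Base k)
  have "compat_excludes_npar (Base k)"
    using compat_excludes_npar_tyo compat_excludes_npar_sort by (cases "k = 0") simp_all
  then show ?case
    using compat_var_heads_Base by blast
next
  case (Fn \<sigma> \<tau>)
  then show ?case
    using compat_excludes_npar_Fn compat_var_heads_Fn by blast
qed

end

theorem lemma6p5:
  fixes N :: "tm \<Rightarrow> tm" and E :: "tm set"
  assumes "is_norm N" and "branch N E" and "evident N E"
  shows "(\<forall>\<sigma> s t. s \<in> Wff \<sigma> \<longrightarrow> t \<in> Wff \<sigma> \<longrightarrow>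
            \<not> (compat N E \<sigma> s t \<and> npar E (N s) (N t))) \<and>
         (\<forall>\<sigma> x ss ts. is_var x \<longrightarrow> length ss = length ts \<longrightarrow>
            apps (Nm x) ss \<in> Wff \<sigma> \<longrightarrow> apps (Nm x) ts \<in> Wff \<sigma> \<longrightarrow>
            compat N E \<sigma> (apps (Nm x) ss) (apps (Nm x) ts) \<or>
            (\<exists>i<length ss. npar E (N (ss ! i)) (N (ts ! i))))"
proof -
  interpret evident_branch N E
    using assms by unfold_locales
  show ?thesis
    using compatibility unfolding compat_excludes_npar_def compat_var_heads_def by blast
qed

end
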